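(* Let $G$ be a countable directed graph and let $x_1\neq x_2$ be vertices of $G$. (a) If $\pi$ is any two-dimensional nest representation of $\mathcal{T}_+(G)$ with $\rho^{(1)}_\pi\in\mathfrak{M}_{G,x_1}$ and $\rho^{(2)}_\pi\in\mathfrak{M}_{G,x_2}$, then there is an edge $e\in\mathcal{E}(G)$ with $s(e)=x_1$ and $r(e)=x_2$. (b) Consequently, $\operatorname{rep}_{x_1,x_2}(\mathcal{T}_+(G))\neq\emptyset$ if and only if there exists an edge $e\in\mathcal{E}(G)$ with $s(e)=x_1$ and $r(e)=x_2$.
   Context: A countable directed graph $G$ has countable vertex set $\mathcal{V}(G)$, edge set $\mathcal{E}(G)$, range and source maps $r,s$. The free semigroupoid $\mathbb{F}^+(G)$ consists of vertices (paths of length $0$) and finite paths $w=e_k\cdots e_1$ with $s(e_i)=r(e_{i-1})$, $s(w)=s(e_1)$, $r(w)=r(e_k)$. On $\ell^2(\mathbb{F}^+(G))$ with orthonormal basis $\{\xi_w\}$, $L_e\xi_w=\xi_{ew}$ if $s(e)=r(w)$ and $0$ otherwise, and $P_v$ is the projection onto $\overline{\operatorname{span}}\{\xi_w:r(w)=v\}$. The tensor algebra $\mathcal{T}_+(G)$ is the norm-closed operator algebra generated by all $L_e$ and $P_v$. $\mathfrak{M}_G$ is the set of characters of $\mathcal{T}_+(G)$ and $\mathfrak{M}_{G,x}=\{\rho\in\mathfrak{M}_G:\rho(P_x)=1\}$. A two-dimensional nest representation is a continuous algebra homomorphism $\pi$ of $\mathcal{T}_+(G)$ onto $\operatorname{Alg}\mathcal{N}$,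 where $\mathcal{H}$ is a 2-dimensional Hilbert space, $\mathcal{N}=\{0,N,I\}$ with $N$ a one-dimensional subspace, and $\operatorname{Alg}\mathcal{N}$ is the algebra of all operators on $\mathcal{H}$ leaving $N$ invariant. Choosing unit vectors $h_2\in N$ and $h_1\in N^\perp$, set $\rho^{(i)}_\pi(A)=\langle\pi(A)h_i,h_i\rangle$, $i=1,2$ (these are characters). For $x_1\neq x_2$, $\operatorname{rep}_{x_1,x_2}(\mathcal{T}_+(G))$ is the set of two-dimensional nest representations $\pi$ with $\rho^{(i)}_\pi\in\mathfrak{M}_{G,x_i}$ for $i=1,2$. *)

theory Defs
  imports "HOL-Analysis.Analysis" "Graph_Theory.Digraph"
begin

text \<open>Directed graph: verts G = vertex set, arcs G = edge set,
  tail G = source map s, head G = range map r.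
  Finite paths w = e_k ... e_1 are represented as Inr [e_k, ..., e_1];
  the vertex v (path of length 0) is represented as Inl v.\<close>

definition fpaths :: "('a,'b) pre_digraph \<Rightarrow> ('a + 'b list) set" where
  "fpaths G = Inl ` verts G \<union>
     {Inr es | es. es \<noteq> [] \<and> set es \<subseteq> arcs G \<and>
        (\<forall>i. Suc i < length es \<longrightarrow> tail G (es ! i) = head G (es ! Suc i))}"

definition prange :: "('a,'b) pre_digraph \<Rightarrow> 'a + 'b list \<Rightarrow> 'a" where
  "prange G u = (case u of Inl v \<Rightarrow> v | Inr es \<Rightarrow> head G (hd es))"

text \<open>Vectors of l2(F+(G)) are functions on path indices (supported on fpaths G);
  operators are maps on such functions.\<close>

type_synonym ('a,'b) fvec = "'a + 'b list \<Rightarrow> complex"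
type_synonym ('a,'b) fop = "('a,'b) fvec \<Rightarrow> ('a,'b) fvec"

definition ell2 :: "('a,'b) pre_digraph \<Rightarrow> ('a,'b) fvec set" where
  "ell2 G = {f. (\<forall>u. u \<notin> fpaths G \<longrightarrow> f u = 0) \<and>
                 (\<lambda>u. (cmod (f u))^2) summable_on UNIV}"

definition l2norm :: "('a,'b) fvec \<Rightarrow> real" where
  "l2norm f = sqrt (\<Sum>\<^sub>\<infinity>u. (cmod (f u))^2)"

text \<open>Left creation operator: L_e xi_w = xi_{ew} if s(e) = r(w), else 0.\<close>
definition Lop :: "('a,'b) pre_digraph \<Rightarrow> 'b \<Rightarrow> ('a,'b) fop" where
  "Lop G e = (\<lambda>f u. case u of
      Inl _ \<Rightarrow> 0
    | Inr es \<Rightarrow> (case es of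
         [] \<Rightarrow> 0
       | a # rest \<Rightarrow> (if a \<noteq> e then 0 else
           (case rest of
              [] \<Rightarrow> f (Inl (tail G e))
            | b # _ \<Rightarrow> (if tail G e = head G b then f (Inr rest) else 0)))))"

definition Pop :: "('a,'b) pre_digraph \<Rightarrow> 'a \<Rightarrow> ('a,'b) fop" where
  "Pop G v = (\<lambda>f u. if prange G u = v then f u else 0)"

definition op_add :: "('a,'b) fop \<Rightarrow> ('a,'b) fop \<Rightarrow> ('a,'b) fop" where
  "op_add A B = (\<lambda>f u. A f u + B f u)"

definition op_scale :: "complex \<Rightarrow> ('a,'b) fop \<Rightarrow> ('a,'b) fop" where
  "op_scale c A = (\<lambda>f u. c * A f u)"

definition bounded_op :: "('a,'b) pre_digraph \<Rightarrow> ('a,'b) fop \<Rightarrow> bool" where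
  "bounded_op G T \<longleftrightarrow> (\<forall>f\<in>ell2 G. T f \<in> ell2 G) \<and>
     (\<exists>K. \<forall>f\<in>ell2 G. l2norm (T f) \<le> K * l2norm f)"

definition opnorm :: "('a,'b) pre_digraph \<Rightarrow> ('a,'b) fop \<Rightarrow> real" where
  "opnorm G T = Sup {l2norm (T f) | f. f \<in> ell2 G \<and> l2norm f \<le> 1}"

inductive_set gen_alg :: "('a,'b) pre_digraph \<Rightarrow> ('a,'b) fop set" for G where
  gen_L: "e \<in> arcs G \<Longrightarrow> Lop G e \<in> gen_alg G"
| gen_P: "v \<in> verts G \<Longrightarrow> Pop G v \<in> gen_alg G"
| gen_add: "A \<in> gen_alg G \<Longrightarrow> B \<in> gen_alg G \<Longrightarrow> op_add A B \<in> gen_alg G"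
| gen_scale: "A \<in> gen_alg G \<Longrightarrow> op_scale c A \<in> gen_alg G"
| gen_mult: "A \<in> gen_alg G \<Longrightarrow> B \<in> gen_alg G \<Longrightarrow> A \<circ> B \<in> gen_alg G"

definition tensor_alg :: "('a,'b) pre_digraph \<Rightarrow> ('a,'b) fop set" where
  "tensor_alg G = {T. bounded_op G T \<and>
     (\<forall>\<epsilon>>0. \<exists>A\<in>gen_alg G. opnorm G (op_add T (op_scale (-1) A)) < \<epsilon>)}"

definition character :: "('a,'b) pre_digraph \<Rightarrow> (('a,'b) fop \<Rightarrow> complex) \<Rightarrow> bool" where
  "character G \<rho> \<longleftrightarrow>
     (\<forall>A\<in>tensor_alg G. \<forall>B\<in>tensor_alg G.
        \<rho> (op_add A B) = \<rho> A + \<rho> B \<and> \<rho> (A \<circ> B) = \<rho> A * \<rho> B) \<and>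
     (\<forall>A\<in>tensor_alg G. \<forall>c. \<rho> (op_scale c A) = c * \<rho> A) \<and>
     (\<exists>A\<in>tensor_alg G. \<rho> A \<noteq> 0)"

definition MGx :: "('a,'b) pre_digraph \<Rightarrow> 'a \<Rightarrow> (('a,'b) fop \<Rightarrow> complex) set" where
  "MGx G x = {\<rho>. character G \<rho> \<and> \<rho> (Pop G x) = 1}"

text \<open>Two-dimensional Hilbert space modelled as complex^2 with its standard
  inner product; N = complex line spanned by a nonzero vector n0.\<close>
definition cinner :: "complex^2 \<Rightarrow> complex^2 \<Rightarrow> complex" where
  "cinner x y = (\<Sum>i\<in>UNIV. x $ i * cnj (y $ i))"

definition cline :: "complex^2 \<Rightarrow> (complex^2) set" where
  "cline n0 = {c *s n0 | c. True}"

definition nest_alg :: "complex^2 \<Rightarrow> (complex^2^2) set" where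
  "nest_alg n0 = {M. \<forall>x\<in>cline n0. M *v x \<in> cline n0}"

definition nest_rep :: "('a,'b) pre_digraph \<Rightarrow> complex^2 \<Rightarrow> (('a,'b) fop \<Rightarrow> complex^2^2) \<Rightarrow> bool" where
  "nest_rep G n0 \<pi> \<longleftrightarrow> n0 \<noteq> 0 \<and>
     (\<forall>A\<in>tensor_alg G. \<forall>B\<in>tensor_alg G.
        \<pi> (op_add A B) = \<pi> A + \<pi> B \<and> \<pi> (A \<circ> B) = \<pi> A ** \<pi> B) \<and>
     (\<forall>A\<in>tensor_alg G. \<forall>c. \<pi> (op_scale c A) = (\<chi> i j. c * \<pi> A $ i $ j)) \<and>
     (\<exists>K. \<forall>A\<in>tensor_alg G. norm (\<pi> A) \<le> K * opnorm G A) \<and>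
     \<pi> ` tensor_alg G = nest_alg n0"

definition rho :: "complex^2 \<Rightarrow> (('a,'b) fop \<Rightarrow> complex^2^2) \<Rightarrow> ('a,'b) fop \<Rightarrow> complex" where
  "rho h \<pi> = (\<lambda>A. cinner (\<pi> A *v h) h)"

definition adapted_basis :: "complex^2 \<Rightarrow> complex^2 \<Rightarrow> complex^2 \<Rightarrow> bool" where
  "adapted_basis n0 h1 h2 \<longleftrightarrow> norm h1 = 1 \<and> norm h2 = 1 \<and> h2 \<in> cline n0 \<and>
     (\<forall>y\<in>cline n0. cinner h1 y = 0)"

definition rep2 :: "('a,'b) pre_digraph \<Rightarrow> 'a \<Rightarrow> 'a \<Rightarrow> (('a,'b) fop \<Rightarrow> complex^2^2) set" where
  "rep2 G x1 x2 = {\<pi>. \<exists>n0 h1 h2. nest_rep G n0 \<pi> \<and> adapted_basis n0 h1 h2 \<and>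
      rho h1 \<pi> \<in> MGx G x1 \<and> rho h2 \<pi> \<in> MGx G x2}"

end

theory Submission
  imports Defs
begin

(* In an orthonormal basis (h1, h2) adapted to the nest, a two-dimensional nest representation pi
   is lower triangular: its diagonal entries are the characters rho1 and rho2, and its
   off-diagonal entry c satisfies c(AB) = c(A) rho1(B) + rho2(A) c(B). Together with the
   relations P_v P_w = [v = w] P_v and P_r(e) L_e = L_e = L_e P_s(e) this forces
   c = (rho1 - rho2) c(P_x1) on every P_v, and on every L_e unless s(e) = x1 and r(e) = x2.
   Without such an edge, c therefore agrees with this inner derivation on the algebra generated
   by the P_v and L_e, and by continuity on all of T_+(G). But pi maps onto Alg N, which
   contains the matrix unit with c = 1 and zero diagonal.
   Conversely, for an edge e from x1 to x2 the orthogonal complement of span{xi_x1, xi_e} is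
   invariant under T_+(G), so the compression to this span is a representation; P_x1, P_x2
   and L_e compress to the three lower triangular matrix units. *)

section \<open>Bounded operators on the path space\<close>

lemma summable_on_le_inj_on:
  fixes F :: "'y \<Rightarrow> real" and g :: "'x \<Rightarrow> real" and \<tau> :: "'x \<Rightarrow> 'y"
  assumes F: "F summable_on UNIV" "\<And>v. F v \<ge> 0" and inj: "inj_on \<tau> D"
    and out: "\<And>u. u \<notin> D \<Longrightarrow> g u = 0" and g_nonneg: "\<And>u. 0 \<le> g u"
    and le: "\<And>u. u \<in> D \<Longrightarrow> g u \<le> F (\<tau> u)"
  shows "g summable_on UNIV \<and> infsum g UNIV \<le> infsum F UNIV"
proof -
  have finite_le: "sum g S \<le> infsum F UNIV" if "finite S" for S
  proof -
    have "sum g S = sum g (S \<inter> D)"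
      using that by (intro sum.mono_neutral_right) (auto simp: out)
    also have "\<dots> \<le> sum (F \<circ> \<tau>) (S \<inter> D)"
      using le by (intro sum_mono) auto
    also have "\<dots> = sum F (\<tau> ` (S \<inter> D))"
      using inj by (subst sum.reindex) (auto intro: inj_on_subset)
    also have "\<dots> \<le> infsum F UNIV"
      using that F by (intro finite_sum_le_infsum) auto
    finally show ?thesis .
  qed
  have summable: "g summable_on UNIV"
    by (rule nonneg_bdd_above_summable_on) (use g_nonneg finite_le in \<open>auto intro!: bdd_aboveI\<close>)
  moreover have "infsum g UNIV \<le> infsum F UNIV"
    by (rule infsum_le_finite_sums[OF summable]) (use finite_le in auto)
  ultimately show ?thesis by blast
qed

lemma l2norm_nonneg: "l2norm f \<ge> 0"
  unfolding l2norm_def by (simp add: infsum_nonneg)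

lemma l2norm_square: "(l2norm f)^2 = (\<Sum>\<^sub>\<infinity>u. (cmod (f u))^2)"
  unfolding l2norm_def by (simp add: infsum_nonneg)

lemma norm_le_l2norm:
  assumes "f \<in> ell2 G" shows "cmod (f u) \<le> l2norm f"
proof -
  have "(\<lambda>u. (cmod (f u))^2) summable_on UNIV" using assms by (simp add: ell2_def)
  then have "sum (\<lambda>u. (cmod (f u))^2) {u} \<le> (\<Sum>\<^sub>\<infinity>u. (cmod (f u))^2)"
    by (rule finite_sum_le_infsum) auto
  then have "(cmod (f u))^2 \<le> (l2norm f)^2" by (simp add: l2norm_square)
  then show ?thesis using l2norm_nonneg by (meson power2_le_imp_le)
qed

lemma ell2_le_reindex:
  assumes f: "f \<in> ell2 G" and support: "\<And>u. u \<notin> fpaths G \<Longrightarrow> g u = 0"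
    and inj: "inj_on \<tau> D" and out: "\<And>u. u \<notin> D \<Longrightarrow> g u = 0"
    and le: "\<And>u. u \<in> D \<Longrightarrow> (cmod (g u))^2 \<le> c * (cmod (f (\<tau> u)))^2" and c: "c \<ge> 0"
  shows "g \<in> ell2 G \<and> (l2norm g)^2 \<le> c * (l2norm f)^2"
proof -
  have f_summable: "(\<lambda>u. (cmod (f u))^2) summable_on UNIV" using f by (simp add: ell2_def)
  have "(\<lambda>u. (cmod (g u))^2) summable_on UNIV \<and>
      (\<Sum>\<^sub>\<infinity>u. (cmod (g u))^2) \<le> (\<Sum>\<^sub>\<infinity>u. c * (cmod (f u))^2)"
    by (rule summable_on_le_inj_on[OF summable_on_cmult_right[OF f_summable] _ inj])
      (use c le out in auto)
  moreover have "(\<Sum>\<^sub>\<infinity>u. c * (cmod (f u))^2) = c * (\<Sum>\<^sub>\<infinity>u. (cmod (f u))^2)"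
    by (rule infsum_cmult_right[OF f_summable])
  ultimately show ?thesis using support by (simp add: ell2_def l2norm_square)
qed

lemma bounded_opE:
  assumes "bounded_op G T"
  obtains K where "K \<ge> 0" "\<And>f. f \<in> ell2 G \<Longrightarrow> T f \<in> ell2 G"
    "\<And>f. f \<in> ell2 G \<Longrightarrow> l2norm (T f) \<le> K * l2norm f"
proof -
  obtain K where K: "\<forall>f\<in>ell2 G. l2norm (T f) \<le> K * l2norm f"
    using assms by (auto simp: bounded_op_def)
  have "l2norm (T f) \<le> max K 0 * l2norm f" if "f \<in> ell2 G" for f
    using K that l2norm_nonneg[of f] by (meson max.cobounded1 mult_right_mono order_trans)
  then show ?thesis using that[of "max K 0"] assms by (auto simp: bounded_op_def)
qed

lemma l2norm_power2_le:
  assumes "K \<ge> 0" "l2norm g \<le> K * l2norm f"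
  shows "(l2norm g)^2 \<le> K^2 * (l2norm f)^2"
  using assms l2norm_nonneg[of g] by (metis power_mono power_mult_distrib)

lemma bounded_opI_power2:
  assumes c: "c \<ge> 0"
    and T: "\<And>f. f \<in> ell2 G \<Longrightarrow> T f \<in> ell2 G \<and> (l2norm (T f))^2 \<le> c * (l2norm f)^2"
  shows "bounded_op G T"
proof -
  have "l2norm (T f) \<le> sqrt c * l2norm f" if "f \<in> ell2 G" for f
  proof -
    have "(l2norm (T f))^2 \<le> (sqrt c * l2norm f)^2"
      using T[OF that] c by (simp add: power_mult_distrib)
    then show ?thesis
      using l2norm_nonneg[of f] c by (meson power2_le_imp_le mult_nonneg_nonneg real_sqrt_ge_zero)
  qed
  then show ?thesis using T unfolding bounded_op_def by blast
qed

lemma norm_add_power2_le: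
  fixes a b :: "'a::real_normed_vector"
  shows "(norm (a + b))^2 \<le> 2 * (norm a)^2 + 2 * (norm b)^2"
proof -
  have "(norm (a + b))^2 \<le> (norm a + norm b)^2"
    by (simp add: power_mono norm_triangle_ineq)
  also have "\<dots> \<le> 2 * (norm a)^2 + 2 * (norm b)^2"
    using zero_le_power2[of "norm a - norm b"] by (simp add: power2_diff power2_sum)
  finally show ?thesis .
qed

lemma bounded_op_add:
  assumes "bounded_op G A" "bounded_op G B"
  shows "bounded_op G (op_add A B)"
proof -
  obtain KA where KA: "KA \<ge> 0" "\<And>f. f \<in> ell2 G \<Longrightarrow> A f \<in> ell2 G"
    "\<And>f. f \<in> ell2 G \<Longrightarrow> l2norm (A f) \<le> KA * l2norm f"
    using bounded_opE[OF assms(1)] by blast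
  obtain KB where KB: "KB \<ge> 0" "\<And>f. f \<in> ell2 G \<Longrightarrow> B f \<in> ell2 G"
    "\<And>f. f \<in> ell2 G \<Longrightarrow> l2norm (B f) \<le> KB * l2norm f"
    using bounded_opE[OF assms(2)] by blast
  show ?thesis
  proof (rule bounded_opI_power2[of "2 * KA^2 + 2 * KB^2"])
    fix f assume f: "f \<in> ell2 G"
    let ?a = "A f" and ?b = "B f"
    have a: "?a \<in> ell2 G" and b: "?b \<in> ell2 G" using KA KB f by auto
    then have sa: "(\<lambda>u. (cmod (?a u))^2) summable_on UNIV"
      and sb: "(\<lambda>u. (cmod (?b u))^2) summable_on UNIV" by (auto simp: ell2_def)
    have sum_le: "(\<lambda>u. (cmod (?a u + ?b u))^2) summable_on UNIV \<and>
        (\<Sum>\<^sub>\<infinity>u. (cmod (?a u + ?b u))^2) \<le> (\<Sum>\<^sub>\<infinity>u. 2 * (cmod (?a u))^2 + 2 * (cmod (?b u))^2)"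
      by (rule summable_on_le_inj_on[OF _ _ inj_on_id[of UNIV]])
        (use norm_add_power2_le sa sb in \<open>auto intro!: summable_on_add summable_on_cmult_right\<close>)
    have "(\<Sum>\<^sub>\<infinity>u. 2 * (cmod (?a u))^2 + 2 * (cmod (?b u))^2) = 2 * (l2norm ?a)^2 + 2 * (l2norm ?b)^2"
      by (simp add: infsum_add summable_on_cmult_right sa sb infsum_cmult_right l2norm_square)
    also have "\<dots> \<le> (2 * KA^2 + 2 * KB^2) * (l2norm f)^2"
      using l2norm_power2_le[OF KA(1) KA(3)[OF f]] l2norm_power2_le[OF KB(1) KB(3)[OF f]]
      by (simp add: algebra_simps)
    finally show "op_add A B f \<in> ell2 G \<and>
        (l2norm (op_add A B f))^2 \<le> (2 * KA^2 + 2 * KB^2) * (l2norm f)^2"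
      using sum_le a b by (auto simp: ell2_def op_add_def l2norm_square)
  qed simp
qed

lemma bounded_op_scale:
  assumes "bounded_op G A"
  shows "bounded_op G (op_scale c A)"
proof -
  obtain K where K: "K \<ge> 0" "\<And>f. f \<in> ell2 G \<Longrightarrow> A f \<in> ell2 G"
    "\<And>f. f \<in> ell2 G \<Longrightarrow> l2norm (A f) \<le> K * l2norm f"
    using bounded_opE[OF assms] by blast
  show ?thesis
  proof (rule bounded_opI_power2[of "(cmod c)^2 * K^2"])
    fix f assume f: "f \<in> ell2 G"
    have Af: "op_scale c A f \<in> ell2 G \<and> (l2norm (op_scale c A f))^2 \<le> (cmod c)^2 * (l2norm (A f))^2"
      by (rule ell2_le_reindex[OF K(2)[OF f] _ inj_on_id[of UNIV]])
        (use K(2)[OF f] in \<open>auto simp: op_scale_def ell2_def norm_mult power_mult_distrib\<close>)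
    moreover have "(cmod c)^2 * (l2norm (A f))^2 \<le> (cmod c)^2 * (K^2 * (l2norm f)^2)"
      using l2norm_power2_le[OF K(1) K(3)[OF f]] by (simp add: mult_left_mono)
    ultimately show "op_scale c A f \<in> ell2 G \<and>
        (l2norm (op_scale c A f))^2 \<le> (cmod c)^2 * K^2 * (l2norm f)^2"
      by (simp add: mult.assoc)
  qed simp
qed

lemma bounded_op_comp:
  assumes "bounded_op G A" "bounded_op G B"
  shows "bounded_op G (A \<circ> B)"
proof -
  obtain KA where KA: "KA \<ge> 0" "\<And>f. f \<in> ell2 G \<Longrightarrow> A f \<in> ell2 G"
    "\<And>f. f \<in> ell2 G \<Longrightarrow> l2norm (A f) \<le> KA * l2norm f"
    using bounded_opE[OF assms(1)] by blast
  obtain KB where KB: "KB \<ge> 0" "\<And>f. f \<in> ell2 G \<Longrightarrow> B f \<in> ell2 G"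
    "\<And>f. f \<in> ell2 G \<Longrightarrow> l2norm (B f) \<le> KB * l2norm f"
    using bounded_opE[OF assms(2)] by blast
  have "l2norm (A (B f)) \<le> (KA * KB) * l2norm f" if "f \<in> ell2 G" for f
  proof -
    have "l2norm (A (B f)) \<le> KA * l2norm (B f)" using KA KB that by auto
    also have "\<dots> \<le> KA * (KB * l2norm f)" using KA KB that by (intro mult_left_mono) auto
    finally show ?thesis by simp
  qed
  then show ?thesis using KA KB unfolding bounded_op_def by auto
qed

lemma bounded_op_Pop: "bounded_op G (Pop G v)"
proof (rule bounded_opI_power2[of 1])
  fix f assume f: "f \<in> ell2 G"
  then have "\<And>u. u \<notin> fpaths G \<Longrightarrow> f u = 0" by (simp add: ell2_def)
  then show "Pop G v f \<in> ell2 G \<and> (l2norm (Pop G v f))^2 \<le> 1 * (l2norm f)^2"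
    by (intro ell2_le_reindex[OF f _ inj_on_id[of UNIV]]) (auto simp: Pop_def)
qed simp

lemma fpaths_Cons:
  assumes "Inr es \<in> fpaths G" "e \<in> arcs G" "tail G e = head G (hd es)"
  shows "Inr (e # es) \<in> fpaths G"
proof -
  have es: "es \<noteq> []" "set es \<subseteq> arcs G"
    "\<forall>i. Suc i < length es \<longrightarrow> tail G (es ! i) = head G (es ! Suc i)"
    using assms(1) unfolding fpaths_def by auto
  have "tail G ((e # es) ! i) = head G ((e # es) ! Suc i)" if "Suc i < length (e # es)" for i
  proof (cases i)
    case 0 then show ?thesis using assms(3) es(1) by (simp add: hd_conv_nth)
  next
    case (Suc j) then show ?thesis using es(3) that by auto
  qed
  then show ?thesis using es assms(2) unfolding fpaths_def by auto
qed

lemma fpaths_single: "e \<in> arcs G \<Longrightarrow> Inr [e] \<in> fpaths G"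
  unfolding fpaths_def by auto

definition Lop_support :: "('a,'b) pre_digraph \<Rightarrow> 'b \<Rightarrow> ('a + 'b list) set" where
  "Lop_support G e = {Inr (e # es) | es. es = [] \<or> tail G e = head G (hd es)}"

definition strip_arc :: "('a,'b) pre_digraph \<Rightarrow> 'b \<Rightarrow> 'a + 'b list \<Rightarrow> 'a + 'b list" where
  "strip_arc G e u = (case u of Inr (_ # es) \<Rightarrow> (if es = [] then Inl (tail G e) else Inr es) | _ \<Rightarrow> u)"

lemma Lop_apply: "Lop G e f u = (if u \<in> Lop_support G e then f (strip_arc G e u) else 0)"
  by (auto simp: Lop_def Lop_support_def strip_arc_def split: sum.split list.split)

lemma inj_on_strip_arc: "inj_on (strip_arc G e) (Lop_support G e)"
  by (rule inj_onI) (auto simp: Lop_support_def strip_arc_def split: if_splits)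

lemma fpaths_if_strip_arc:
  assumes e: "e \<in> arcs G" and u: "u \<in> Lop_support G e" and strip: "strip_arc G e u \<in> fpaths G"
  shows "u \<in> fpaths G"
proof -
  obtain es where u: "u = Inr (e # es)" and es: "es = [] \<or> tail G e = head G (hd es)"
    using u by (auto simp: Lop_support_def)
  show ?thesis
  proof (cases "es = []")
    case True then show ?thesis using u fpaths_single[OF e] by simp
  next
    case False
    then have "Inr es \<in> fpaths G" using strip u by (simp add: strip_arc_def)
    then show ?thesis using u es False fpaths_Cons[OF _ e] by auto
  qed
qed

lemma Pop_comp_Pop: "Pop G v \<circ> Pop G w = (if v = w then Pop G v else (\<lambda>f u. 0))"
  by (auto simp: Pop_def fun_eq_iff)

lemma Pop_head_comp_Lop: "Pop G (head G e) \<circ> Lop G e = Lop G e"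
  by (auto simp: fun_eq_iff Pop_def Lop_apply Lop_support_def prange_def)

lemma Lop_comp_Pop_tail: "Lop G e \<circ> Pop G (tail G e) = Lop G e"
  by (auto simp: fun_eq_iff Pop_def Lop_apply Lop_support_def prange_def strip_arc_def)

lemma bounded_op_Lop:
  assumes e: "e \<in> arcs G"
  shows "bounded_op G (Lop G e)"
proof (rule bounded_opI_power2[of 1])
  fix f assume f: "f \<in> ell2 G"
  then have "\<And>u. u \<notin> fpaths G \<Longrightarrow> f u = 0" by (simp add: ell2_def)
  then have "Lop G e f u = 0" if "u \<notin> fpaths G" for u
    using that fpaths_if_strip_arc[OF e] by (auto simp: Lop_apply)
  then show "Lop G e f \<in> ell2 G \<and> (l2norm (Lop G e f))^2 \<le> 1 * (l2norm f)^2"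
    by (intro ell2_le_reindex[OF f _ inj_on_strip_arc]) (auto simp: Lop_apply)
qed simp

lemma bounded_op_gen_alg: "A \<in> gen_alg G \<Longrightarrow> bounded_op G A"
proof (induction rule: gen_alg.induct)
  case (gen_mult A B) show ?case using gen_mult.IH by (rule bounded_op_comp)
qed (simp_all add: bounded_op_Lop bounded_op_Pop bounded_op_add bounded_op_scale)

lemma zero_ell2: "(\<lambda>u. 0) \<in> ell2 G"
  by (simp add: ell2_def)

lemma l2norm_zero: "l2norm (\<lambda>u. 0) = 0"
  by (simp add: l2norm_def)

lemma opnorm_zero:
  fixes G :: "('a,'b) pre_digraph"
  shows "opnorm G (\<lambda>f u. 0) = 0"
proof -
  have eq: "{l2norm (\<lambda>u. 0::complex) | f :: ('a,'b) fvec. f \<in> ell2 G \<and> l2norm f \<le> 1} = {0}"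
    using zero_ell2[of G] by (auto simp: l2norm_zero)
  show ?thesis unfolding opnorm_def eq by simp
qed

lemma bdd_above_opnorm:
  assumes "bounded_op G T"
  shows "bdd_above {l2norm (T f) | f. f \<in> ell2 G \<and> l2norm f \<le> 1}"
proof -
  obtain K where K: "K \<ge> 0" "\<And>f. f \<in> ell2 G \<Longrightarrow> l2norm (T f) \<le> K * l2norm f"
    using bounded_opE[OF assms] by metis
  have "l2norm (T f) \<le> K" if "f \<in> ell2 G" "l2norm f \<le> 1" for f
    using K(2)[OF that(1)] mult_left_mono[OF that(2) K(1)] by simp
  then show ?thesis by (auto intro!: bdd_aboveI)
qed

lemma l2norm_le_opnorm:
  assumes "bounded_op G T" "f \<in> ell2 G" "l2norm f \<le> 1"
  shows "l2norm (T f) \<le> opnorm G T"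
  unfolding opnorm_def using assms(2,3) by (intro cSup_upper[OF _ bdd_above_opnorm[OF assms(1)]]) blast

lemma cmod_le_opnorm:
  assumes "bounded_op G T" "f \<in> ell2 G" "l2norm f \<le> 1"
  shows "cmod (T f u) \<le> opnorm G T"
proof -
  have "T f \<in> ell2 G" using assms(1,2) by (simp add: bounded_op_def)
  then show ?thesis using norm_le_l2norm l2norm_le_opnorm[OF assms] order_trans by blast
qed

lemma opnorm_nonneg:
  assumes "bounded_op G T"
  shows "opnorm G T \<ge> 0"
  using l2norm_le_opnorm[OF assms zero_ell2] l2norm_nonneg[of "T (\<lambda>u. 0)"] by (simp add: l2norm_zero)

lemma bounded_op_tensor_alg: "T \<in> tensor_alg G \<Longrightarrow> bounded_op G T"
  by (simp add: tensor_alg_def)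

lemma tensor_alg_approx:
  assumes "T \<in> tensor_alg G" "\<epsilon> > 0"
  obtains B where "B \<in> gen_alg G" "opnorm G (op_add T (op_scale (-1) B)) < \<epsilon>"
  using assms by (auto simp: tensor_alg_def)

lemma tensor_alg_if_gen_alg:
  assumes A: "A \<in> gen_alg G"
  shows "A \<in> tensor_alg G"
proof -
  have "op_add A (op_scale (-1) A) = (\<lambda>f u. 0)"
    by (simp add: op_add_def op_scale_def)
  then have "opnorm G (op_add A (op_scale (-1) A)) = 0"
    by (simp add: opnorm_zero)
  then have "\<exists>B\<in>gen_alg G. opnorm G (op_add A (op_scale (-1) B)) < \<epsilon>" if "\<epsilon> > 0" for \<epsilon>
    using A that by (intro bexI[of _ A]) simp_all
  then show ?thesis
    unfolding tensor_alg_def using bounded_op_gen_alg[OF A] by blast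
qed

lemma Pop_in_tensor_alg: "v \<in> verts G \<Longrightarrow> Pop G v \<in> tensor_alg G"
  by (rule tensor_alg_if_gen_alg[OF gen_alg.gen_P])

lemma Lop_in_tensor_alg: "e \<in> arcs G \<Longrightarrow> Lop G e \<in> tensor_alg G"
  by (rule tensor_alg_if_gen_alg[OF gen_alg.gen_L])

lemma tensor_alg_diff_gen_alg:
  assumes T: "T \<in> tensor_alg G" and B: "B \<in> gen_alg G"
  shows "op_add T (op_scale (-1) B) \<in> tensor_alg G"
proof -
  have "\<exists>C\<in>gen_alg G. opnorm G (op_add (op_add T (op_scale (-1) B)) (op_scale (-1) C)) < \<epsilon>"
    if eps: "\<epsilon> > 0" for \<epsilon>
  proof -
    obtain C where C: "C \<in> gen_alg G" "opnorm G (op_add T (op_scale (-1) C)) < \<epsilon>"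
      using tensor_alg_approx[OF T eps] .
    have "op_add (op_add T (op_scale (-1) B)) (op_scale (-1) (op_add C (op_scale (-1) B)))
        = op_add T (op_scale (-1) C)"
      by (simp add: op_add_def op_scale_def algebra_simps)
    then show ?thesis
      using C B by (intro bexI[of _ "op_add C (op_scale (-1) B)"]) (auto intro: gen_alg.intros)
  qed
  moreover have "bounded_op G (op_add T (op_scale (-1) B))"
    by (intro bounded_op_add bounded_op_scale bounded_op_tensor_alg[OF T] bounded_op_gen_alg[OF B])
  ultimately show ?thesis by (simp add: tensor_alg_def)
qed

lemma tensor_alg_approx_pointwise:
  assumes T: "T \<in> tensor_alg G" and "\<epsilon> > 0"
  obtains B where "B \<in> gen_alg G"
    "\<And>h u. h \<in> ell2 G \<Longrightarrow> l2norm h \<le> 1 \<Longrightarrow> cmod (T h u - B h u) < \<epsilon>"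
proof -
  obtain B where B: "B \<in> gen_alg G" "opnorm G (op_add T (op_scale (-1) B)) < \<epsilon>"
    using tensor_alg_approx[OF assms] .
  have D: "bounded_op G (op_add T (op_scale (-1) B))"
    by (intro bounded_op_add bounded_op_scale bounded_op_tensor_alg[OF T] bounded_op_gen_alg[OF B(1)])
  have "cmod (T h u - B h u) < \<epsilon>" if "h \<in> ell2 G" "l2norm h \<le> 1" for h u
    using cmod_le_opnorm[OF D that, of u] B(2) by (simp add: op_add_def op_scale_def)
  then show ?thesis using B(1) that by blast
qed

lemma zero_if_norm_le_eps:
  fixes z :: "'a::real_normed_vector"
  assumes "\<And>\<epsilon>. \<epsilon> > 0 \<Longrightarrow> norm z \<le> C * \<epsilon>"
  shows "z = 0"
proof (rule ccontr)
  assume "z \<noteq> 0"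
  then have pos: "norm z > 0" by simp
  then have "C > 0" using assms[of 1] by linarith
  then have "norm z \<le> C * (norm z / (2 * C))" using assms[of "norm z / (2 * C)"] pos by simp
  then show False using pos \<open>C > 0\<close> by simp
qed

lemma bounded_functional_vanishes:
  fixes \<phi> :: "('a,'b) fop \<Rightarrow> complex"
  assumes add: "\<And>A B. A \<in> tensor_alg G \<Longrightarrow> B \<in> tensor_alg G \<Longrightarrow> \<phi> (op_add A B) = \<phi> A + \<phi> B"
    and scale: "\<And>A c. A \<in> tensor_alg G \<Longrightarrow> \<phi> (op_scale c A) = c * \<phi> A"
    and bounded: "\<And>A. A \<in> tensor_alg G \<Longrightarrow> cmod (\<phi> A) \<le> C * opnorm G A"
    and gen: "\<And>B. B \<in> gen_alg G \<Longrightarrow> \<phi> B = 0"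
    and A: "A \<in> tensor_alg G"
  shows "\<phi> A = 0"
proof (rule zero_if_norm_le_eps)
  fix \<epsilon> :: real assume "\<epsilon> > 0"
  then obtain B where B: "B \<in> gen_alg G" "opnorm G (op_add A (op_scale (-1) B)) < \<epsilon>"
    using tensor_alg_approx[OF A] by blast
  let ?D = "op_add A (op_scale (-1) B)"
  have BT: "B \<in> tensor_alg G" "op_scale (-1) B \<in> tensor_alg G"
    using B(1) by (simp_all add: tensor_alg_if_gen_alg gen_alg.gen_scale)
  have D: "?D \<in> tensor_alg G" by (rule tensor_alg_diff_gen_alg[OF A B(1)])
  have D_nonneg: "opnorm G ?D \<ge> 0" by (rule opnorm_nonneg[OF bounded_op_tensor_alg[OF D]])
  have "\<phi> A = \<phi> ?D" using add[OF A BT(2)] scale[OF BT(1)] gen[OF B(1)] by simp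
  then have "cmod (\<phi> A) \<le> C * opnorm G ?D" using bounded[OF D] by simp
  also have "\<dots> \<le> max C 0 * opnorm G ?D" using D_nonneg by (intro mult_right_mono) auto
  also have "\<dots> \<le> max C 0 * \<epsilon>" using B(2) by (intro mult_left_mono) auto
  finally show "norm (\<phi> A) \<le> max C 0 * \<epsilon>" by simp
qed

section \<open>Two-by-two matrices in an orthonormal basis\<close>

lemma matrix_vector_mult_2: "((X::complex^2^2) *v v) $ i = X$i$1 * v$1 + X$i$2 * v$2"
  by (simp add: matrix_vector_mult_def sum_2)

lemma matrix_vector_mult_lincomb:
  "(X::complex^2^2) *v (a *s u + c *s w) = a *s (X *v u) + c *s (X *v w)"
  by (simp add: vec_eq_iff matrix_vector_mult_2 algebra_simps)

lemma cinner_2: "cinner x y = x$1 * cnj (y$1) + x$2 * cnj (y$2)"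
  by (simp add: cinner_def sum_2)

lemma cinner_self: "cinner x x = of_real ((norm x)^2)"
proof -
  have "(norm x)^2 = (cmod (x$1))^2 + (cmod (x$2))^2"
    by (simp add: norm_vec_def L2_set_def sum_2)
  moreover have "cinner x x = of_real ((cmod (x$1))^2) + of_real ((cmod (x$2))^2)"
    by (simp only: cinner_2 complex_norm_square)
  ultimately show ?thesis by simp
qed

lemma cinner_commute: "cinner y x = cnj (cinner x y)"
  by (simp add: cinner_2)

lemma cinner_lincomb_left: "cinner (a *s u + c *s w) z = a * cinner u z + c * cinner w z"
  by (simp add: cinner_2 algebra_simps)

lemma cinner_scale_left: "cinner (a *s u) z = a * cinner u z"
  by (simp add: cinner_2 algebra_simps)

lemma orthonormal_expansion:
  fixes b :: "2 \<Rightarrow> complex^2"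
  assumes orth: "\<And>i j. cinner (b i) (b j) = (if i = j then 1 else 0)"
  shows "v = cinner v (b 1) *s b 1 + cinner v (b 2) *s b 2"
proof -
  define p q r s where "p = b 1 $ 1" "q = b 1 $ 2" "r = b 2 $ 1" "s = b 2 $ 2"
  define p' q' r' s'
    where "p' = cnj (b 1 $ 1)" "q' = cnj (b 1 $ 2)" "r' = cnj (b 2 $ 1)" "s' = cnj (b 2 $ 2)"
  have "p * p' + q * q' = 1" "r * r' + s * s' = 1" "p * r' + q * s' = 0" "r * p' + s * q' = 0"
    using orth[of 1 1] orth[of 2 2] orth[of 1 2] orth[of 2 1]
    by (simp_all add: cinner_2 p_q_r_s_def p'_q'_r'_s'_def)
  then have "(v$1 * p' + v$2 * q') * p + (v$1 * r' + v$2 * s') * r = v$1"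
      "(v$1 * p' + v$2 * q') * q + (v$1 * r' + v$2 * s') * s = v$2"
    by algebra+
  then have "cinner v (b 1) * b 1 $ 1 + cinner v (b 2) * b 2 $ 1 = v$1"
      "cinner v (b 1) * b 1 $ 2 + cinner v (b 2) * b 2 $ 2 = v$2"
    unfolding cinner_2 p_q_r_s_def p'_q'_r'_s'_def .
  then show ?thesis by (simp add: vec_eq_iff forall_2)
qed

definition coeff_matrix :: "(2 \<Rightarrow> complex^2) \<Rightarrow> complex^2^2 \<Rightarrow> complex^2^2" where
  "coeff_matrix b X = (\<chi> i j. cinner (X *v b j) (b i))"

lemma coeff_matrix_add: "coeff_matrix b (X + Y) = coeff_matrix b X + coeff_matrix b Y"
  by (simp add: vec_eq_iff coeff_matrix_def cinner_2 matrix_vector_mult_2 algebra_simps)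

lemma coeff_matrix_scale:
  "coeff_matrix b (\<chi> i j. c * X $ i $ j) = (\<chi> i j. c * coeff_matrix b X $ i $ j)"
  by (simp add: vec_eq_iff coeff_matrix_def cinner_2 matrix_vector_mult_2 algebra_simps)

lemma coeff_matrix_mult:
  assumes orth: "\<And>i j. cinner (b i) (b j) = (if i = j then 1 else 0)"
  shows "coeff_matrix b (X ** Y) = coeff_matrix b X ** coeff_matrix b Y"
proof -
  have "cinner ((X ** Y) *v b j) (b i) =
      cinner (X *v b 1) (b i) * cinner (Y *v b j) (b 1) + cinner (X *v b 2) (b i) * cinner (Y *v b j) (b 2)"
    for i j
  proof -
    let ?v = "Y *v b j"
    have "(X ** Y) *v b j = X *v (cinner ?v (b 1) *s b 1 + cinner ?v (b 2) *s b 2)"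
      using orthonormal_expansion[OF orth, of ?v] by (metis matrix_vector_mul_assoc)
    then show ?thesis by (simp add: matrix_vector_mult_lincomb cinner_lincomb_left)
  qed
  then show ?thesis by (simp add: vec_eq_iff coeff_matrix_def matrix_matrix_mult_def sum_2)
qed

lemma norm_vec_2: "norm (x::'a::real_normed_vector^2) \<le> norm (x$1) + norm (x$2)"
proof -
  have "norm x = L2_set (\<lambda>i. norm (x$i)) UNIV" by (simp add: norm_vec_def)
  also have "\<dots> \<le> sum (\<lambda>i. norm (x$i)) UNIV" by (rule L2_set_le_sum) simp
  finally show ?thesis by (simp add: sum_2)
qed

lemma norm_le_entries:
  "norm (M::complex^2^2) \<le> cmod (M$1$1) + cmod (M$1$2) + cmod (M$2$1) + cmod (M$2$2)"
  using norm_vec_2[of M] norm_vec_2[of "M$1"] norm_vec_2[of "M$2"] by linarith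

lemma norm_entry_le: "cmod (M $ i $ j) \<le> norm (M::complex^2^2)"
  by (rule order_trans[OF Finite_Cartesian_Product.norm_nth_le Finite_Cartesian_Product.norm_nth_le])

lemma norm_coeff_matrix_le:
  assumes "\<And>k. norm (b k) \<le> 1"
  shows "norm (coeff_matrix b X) \<le> 16 * norm X"
proof -
  have b: "cmod (b k $ l) \<le> 1" for k l
    by (rule order_trans[OF Finite_Cartesian_Product.norm_nth_le assms])
  have Xb: "cmod ((X *v b j) $ k) \<le> 2 * norm X" for j k
  proof -
    have "cmod ((X *v b j) $ k) \<le> cmod (X$k$1) * cmod (b j $ 1) + cmod (X$k$2) * cmod (b j $ 2)"
      unfolding matrix_vector_mult_2 by (rule order_trans[OF norm_triangle_ineq]) (simp add: norm_mult)
    also have "\<dots> \<le> norm X * 1 + norm X * 1"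
      by (intro add_mono mult_mono norm_entry_le b) auto
    finally show ?thesis by simp
  qed
  have entry: "cmod (coeff_matrix b X $ i $ j) \<le> 4 * norm X" for i j
  proof -
    have "cmod (coeff_matrix b X $ i $ j)
        \<le> cmod ((X *v b j) $ 1) * cmod (b i $ 1) + cmod ((X *v b j) $ 2) * cmod (b i $ 2)"
      unfolding coeff_matrix_def cinner_2 vec_lambda_beta
      by (rule order_trans[OF norm_triangle_ineq]) (simp add: norm_mult)
    also have "\<dots> \<le> 2 * norm X * 1 + 2 * norm X * 1"
      by (intro add_mono mult_mono Xb b) auto
    finally show ?thesis by simp
  qed
  show ?thesis
    using norm_le_entries[of "coeff_matrix b X"] entry[of 1 1] entry[of 1 2] entry[of 2 1] entry[of 2 2]
    by linarith
qed

definition pair_basis :: "complex^2 \<Rightarrow> complex^2 \<Rightarrow> 2 \<Rightarrow> complex^2" where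
  "pair_basis h1 h2 k = (if k = 1 then h1 else h2)"

definition lower_unit :: "complex^2^2" where
  "lower_unit = (\<chi> i j. if i = 2 \<and> j = 1 then 1 else 0)"

lemma adapted_basis_cinner:
  assumes "adapted_basis n0 h1 h2"
  shows "cinner h1 h1 = 1" "cinner h2 h2 = 1" "cinner h1 h2 = 0" "cinner h2 h1 = 0"
  using assms cinner_commute[of h2 h1] by (simp_all add: adapted_basis_def cinner_self)

lemma adapted_basis_orthonormal:
  assumes "adapted_basis n0 h1 h2"
  shows "cinner (pair_basis h1 h2 i) (pair_basis h1 h2 j) = (if i = j then 1 else 0)"
  using adapted_basis_cinner[OF assms] exhaust_2[of i] exhaust_2[of j] by (auto simp: pair_basis_def)

lemma adapted_basis_norm: "adapted_basis n0 h1 h2 \<Longrightarrow> norm (pair_basis h1 h2 k) \<le> 1"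
  by (simp add: adapted_basis_def pair_basis_def)

lemma coeff_matrix_nest_alg_upper:
  assumes "adapted_basis n0 h1 h2" "X \<in> nest_alg n0"
  shows "coeff_matrix (pair_basis h1 h2) X $ 1 $ 2 = 0"
proof -
  have "X *v h2 \<in> cline n0" using assms by (simp add: adapted_basis_def nest_alg_def)
  then have "cinner h1 (X *v h2) = 0" using assms(1) by (simp add: adapted_basis_def)
  then show ?thesis using cinner_commute[of "X *v h2" h1] by (simp add: coeff_matrix_def pair_basis_def)
qed

text \<open>The rank-one operator \<open>x \<mapsto> \<langle>x, h1\<rangle> h2\<close> kills the nest and maps \<open>h1\<close> to \<open>h2\<close>.\<close>

lemma lower_unit_in_coeff_matrix_image:
  assumes ab: "adapted_basis n0 h1 h2"
  obtains N where "N \<in> nest_alg n0" "coeff_matrix (pair_basis h1 h2) N = lower_unit"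
proof
  define N where "N = (\<chi> i j. h2$i * cnj (h1$j))"
  have N: "N *v x = cinner x h1 *s h2" for x
    by (simp add: vec_eq_iff N_def matrix_vector_mult_2 cinner_2 algebra_simps)
  have "cinner x h1 = 0" if "x \<in> cline n0" for x
    using ab that cinner_commute[of x h1] by (simp add: adapted_basis_def)
  then show "N \<in> nest_alg n0"
    by (auto simp: nest_alg_def N cline_def intro: exI[of _ 0])
  show "coeff_matrix (pair_basis h1 h2) N = lower_unit"
    using adapted_basis_cinner[OF ab]
    by (simp add: vec_eq_iff forall_2 coeff_matrix_def lower_unit_def N cinner_scale_left pair_basis_def)
qed

definition matrix_hom :: "('a,'b) pre_digraph \<Rightarrow> (('a,'b) fop \<Rightarrow> complex^2^2) \<Rightarrow> bool" where
  "matrix_hom G \<tau> \<longleftrightarrow>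
     (\<forall>A\<in>tensor_alg G. \<forall>B\<in>tensor_alg G.
        \<tau> (op_add A B) = \<tau> A + \<tau> B \<and> \<tau> (A \<circ> B) = \<tau> A ** \<tau> B) \<and>
     (\<forall>A\<in>tensor_alg G. \<forall>c. \<tau> (op_scale c A) = (\<chi> i j. c * \<tau> A $ i $ j))"

lemma matrix_hom_add: "matrix_hom G \<tau> \<Longrightarrow> A \<in> tensor_alg G \<Longrightarrow> B \<in> tensor_alg G \<Longrightarrow>
    \<tau> (op_add A B) = \<tau> A + \<tau> B"
  by (simp add: matrix_hom_def)

lemma matrix_hom_comp: "matrix_hom G \<tau> \<Longrightarrow> A \<in> tensor_alg G \<Longrightarrow> B \<in> tensor_alg G \<Longrightarrow>
    \<tau> (A \<circ> B) = \<tau> A ** \<tau> B"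
  by (simp add: matrix_hom_def)

lemma matrix_hom_scale: "matrix_hom G \<tau> \<Longrightarrow> A \<in> tensor_alg G \<Longrightarrow>
    \<tau> (op_scale c A) = (\<chi> i j. c * \<tau> A $ i $ j)"
  by (simp add: matrix_hom_def)

lemma nest_rep_iff: "nest_rep G n0 \<pi> \<longleftrightarrow> n0 \<noteq> 0 \<and> matrix_hom G \<pi> \<and>
    (\<exists>K. \<forall>A\<in>tensor_alg G. norm (\<pi> A) \<le> K * opnorm G A) \<and> \<pi> ` tensor_alg G = nest_alg n0"
  unfolding nest_rep_def matrix_hom_def by blast

lemma matrix_hom_coeff_matrix:
  assumes "matrix_hom G \<pi>" and "\<And>i j. cinner (b i) (b j) = (if i = j then 1 else 0)"
  shows "matrix_hom G (coeff_matrix b \<circ> \<pi>)"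
  using assms
  by (simp add: matrix_hom_def coeff_matrix_add coeff_matrix_mult coeff_matrix_scale)

lemma character_diagonal_entry:
  assumes hom: "matrix_hom G \<tau>" and upper: "\<And>A. A \<in> tensor_alg G \<Longrightarrow> \<tau> A $ 1 $ 2 = 0"
    and "A0 \<in> tensor_alg G" "\<tau> A0 $ k $ k \<noteq> 0"
  shows "character G (\<lambda>A. \<tau> A $ k $ k)"
proof -
  have "\<tau> (A \<circ> B) $ k $ k = \<tau> A $ k $ k * \<tau> B $ k $ k"
    if "A \<in> tensor_alg G" "B \<in> tensor_alg G" for A B
    using matrix_hom_comp[OF hom that] upper[OF that(1)] upper[OF that(2)] exhaust_2[of k]
    by (auto simp: matrix_matrix_mult_def sum_2)
  then show ?thesis
    using assms by (auto simp: character_def matrix_hom_add matrix_hom_scale)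
qed

section \<open>Lower triangular representations force an edge\<close>

locale lower_triangular_rep =
  fixes G :: "('a,'b) pre_digraph" and \<tau> :: "('a,'b) fop \<Rightarrow> complex^2^2" and x1 x2 :: 'a
  assumes wf: "wf_digraph G" and hom: "matrix_hom G \<tau>"
    and upper: "\<And>A. A \<in> tensor_alg G \<Longrightarrow> \<tau> A $ 1 $ 2 = 0"
    and x1: "x1 \<in> verts G" and x2: "x2 \<in> verts G" and distinct: "x1 \<noteq> x2"
    and diag_x1: "\<tau> (Pop G x1) $ 1 $ 1 = 1" and diag_x2: "\<tau> (Pop G x2) $ 2 $ 2 = 1"
begin

lemma mult_entries:
  assumes "A \<in> tensor_alg G" "B \<in> tensor_alg G"
  shows "\<tau> (A \<circ> B) $ 1 $ 1 = \<tau> A $ 1 $ 1 * \<tau> B $ 1 $ 1"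
    "\<tau> (A \<circ> B) $ 2 $ 2 = \<tau> A $ 2 $ 2 * \<tau> B $ 2 $ 2"
    "\<tau> (A \<circ> B) $ 2 $ 1 = \<tau> A $ 2 $ 1 * \<tau> B $ 1 $ 1 + \<tau> A $ 2 $ 2 * \<tau> B $ 2 $ 1"
  using matrix_hom_comp[OF hom assms] upper[OF assms(1)] upper[OF assms(2)]
  by (simp_all add: matrix_matrix_mult_def sum_2)

lemma zero_op: "\<tau> (\<lambda>f u. 0) = 0"
proof -
  have "(\<lambda>f u. 0) = op_scale 0 (Pop G x1)" by (simp add: op_scale_def)
  then show ?thesis
    using matrix_hom_scale[OF hom Pop_in_tensor_alg[OF x1], of 0]
    by (simp add: vec_eq_iff)
qed

lemma diag_Pop:
  assumes v: "v \<in> verts G"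
  shows "\<tau> (Pop G v) $ 1 $ 1 = (if v = x1 then 1 else 0)"
    "\<tau> (Pop G v) $ 2 $ 2 = (if v = x2 then 1 else 0)"
proof -
  have "\<tau> (Pop G v \<circ> Pop G x1) $ 1 $ 1 = \<tau> (Pop G v) $ 1 $ 1"
    "\<tau> (Pop G v \<circ> Pop G x2) $ 2 $ 2 = \<tau> (Pop G v) $ 2 $ 2"
    using mult_entries[OF Pop_in_tensor_alg[OF v]] Pop_in_tensor_alg[OF x1] Pop_in_tensor_alg[OF x2]
      diag_x1 diag_x2 by simp_all
  then show "\<tau> (Pop G v) $ 1 $ 1 = (if v = x1 then 1 else 0)"
    "\<tau> (Pop G v) $ 2 $ 2 = (if v = x2 then 1 else 0)"
    using diag_x1 diag_x2 by (auto simp: Pop_comp_Pop zero_op split: if_splits)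
qed

lemma off_diag_Pop_x2: "\<tau> (Pop G x2) $ 2 $ 1 = - \<tau> (Pop G x1) $ 2 $ 1"
proof -
  have "\<tau> (Pop G x2 \<circ> Pop G x1) $ 2 $ 1 = \<tau> (Pop G x2) $ 2 $ 1 + \<tau> (Pop G x1) $ 2 $ 1"
    using mult_entries(3)[OF Pop_in_tensor_alg[OF x2] Pop_in_tensor_alg[OF x1]]
      diag_Pop[OF x1] diag_Pop[OF x2] distinct by simp
  then show ?thesis using distinct by (simp add: Pop_comp_Pop zero_op eq_neg_iff_add_eq_0)
qed

lemma off_diag_Pop:
  assumes v: "v \<in> verts G"
  shows "\<tau> (Pop G v) $ 2 $ 1 = (\<tau> (Pop G v) $ 1 $ 1 - \<tau> (Pop G v) $ 2 $ 2) * \<tau> (Pop G x1) $ 2 $ 1"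
proof -
  have "\<tau> (Pop G v) $ 2 $ 1 = 0" if "v \<noteq> x1" "v \<noteq> x2"
  proof -
    have "\<tau> (Pop G v \<circ> Pop G v) $ 2 $ 1 = 0"
      using mult_entries(3)[OF Pop_in_tensor_alg[OF v] Pop_in_tensor_alg[OF v]] diag_Pop[OF v] that
      by simp
    then show ?thesis by (simp add: Pop_comp_Pop)
  qed
  then show ?thesis
    using diag_Pop[OF v] diag_Pop[OF x1] off_diag_Pop_x2 distinct by auto
qed

lemma off_diag_Lop:
  assumes e: "e \<in> arcs G" and not_x1_x2: "\<not> (tail G e = x1 \<and> head G e = x2)"
  shows "\<tau> (Lop G e) $ 2 $ 1 = (\<tau> (Lop G e) $ 1 $ 1 - \<tau> (Lop G e) $ 2 $ 2) * \<tau> (Pop G x1) $ 2 $ 1"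
proof -
  let ?L = "Lop G e" and ?r = "head G e" and ?s = "tail G e"
  have r: "?r \<in> verts G" and s: "?s \<in> verts G"
    using e wf by (simp_all add: wf_digraph.head_in_verts wf_digraph.tail_in_verts)
  have L: "?L \<in> tensor_alg G" by (rule Lop_in_tensor_alg[OF e])
  have left: "\<tau> ?L $ 1 $ 1 = \<tau> (Pop G ?r) $ 1 $ 1 * \<tau> ?L $ 1 $ 1"
      "\<tau> ?L $ 2 $ 2 = \<tau> (Pop G ?r) $ 2 $ 2 * \<tau> ?L $ 2 $ 2"
      "\<tau> ?L $ 2 $ 1 = \<tau> (Pop G ?r) $ 2 $ 1 * \<tau> ?L $ 1 $ 1 + \<tau> (Pop G ?r) $ 2 $ 2 * \<tau> ?L $ 2 $ 1"
    using mult_entries[OF Pop_in_tensor_alg[OF r] L] by (simp_all add: Pop_head_comp_Lop)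
  have right: "\<tau> ?L $ 1 $ 1 = \<tau> ?L $ 1 $ 1 * \<tau> (Pop G ?s) $ 1 $ 1"
      "\<tau> ?L $ 2 $ 2 = \<tau> ?L $ 2 $ 2 * \<tau> (Pop G ?s) $ 2 $ 2"
      "\<tau> ?L $ 2 $ 1 = \<tau> ?L $ 2 $ 1 * \<tau> (Pop G ?s) $ 1 $ 1 + \<tau> ?L $ 2 $ 2 * \<tau> (Pop G ?s) $ 2 $ 1"
    using mult_entries[OF L Pop_in_tensor_alg[OF s]] by (simp_all add: Lop_comp_Pop_tail)
  consider "\<tau> ?L $ 1 $ 1 \<noteq> 0" | "\<tau> ?L $ 1 $ 1 = 0" "\<tau> ?L $ 2 $ 2 \<noteq> 0"
    | "\<tau> ?L $ 1 $ 1 = 0" "\<tau> ?L $ 2 $ 2 = 0" by blast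
  then show ?thesis
  proof cases
    case 1
    then have "?r = x1" using left(1) diag_Pop(1)[OF r] by (auto split: if_splits)
    then show ?thesis using left diag_Pop(2)[OF r] distinct by simp
  next
    case 2
    then have "?s = x2" using right(2) diag_Pop(2)[OF s] by (auto split: if_splits)
    then show ?thesis using 2 right diag_Pop(1)[OF s] off_diag_Pop_x2 distinct by simp
  next
    case 3
    have "\<tau> ?L $ 2 $ 1 = 0"
    proof (rule ccontr)
      assume "\<tau> ?L $ 2 $ 1 \<noteq> 0"
      then have "?r = x2" "?s = x1"
        using 3 left(3) right(3) diag_Pop(2)[OF r] diag_Pop(1)[OF s] by (auto split: if_splits)
      then show False using not_x1_x2 by simp
    qed
    then show ?thesis using 3 by simp
  qed
qed

lemma off_diag_gen_alg:
  assumes no_arc: "\<not> (\<exists>e\<in>arcs G. tail G e = x1 \<and> head G e = x2)" and B: "B \<in> gen_alg G"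
  shows "\<tau> B $ 2 $ 1 = (\<tau> B $ 1 $ 1 - \<tau> B $ 2 $ 2) * \<tau> (Pop G x1) $ 2 $ 1"
  using B
proof (induction rule: gen_alg.induct)
  case (gen_L e)
  then show ?case using off_diag_Lop no_arc by blast
next
  case (gen_P v)
  then show ?case by (rule off_diag_Pop)
next
  case (gen_add A B)
  have "A \<in> tensor_alg G" "B \<in> tensor_alg G" using gen_add.hyps by (simp_all add: tensor_alg_if_gen_alg)
  then show ?case by (simp add: gen_add.IH matrix_hom_add[OF hom] algebra_simps)
next
  case (gen_scale A c)
  have "A \<in> tensor_alg G" using gen_scale.hyps by (simp add: tensor_alg_if_gen_alg)
  then show ?case by (simp add: gen_scale.IH matrix_hom_scale[OF hom] algebra_simps)
next
  case (gen_mult A B)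
  have AB: "A \<in> tensor_alg G" "B \<in> tensor_alg G"
    using gen_mult.hyps by (simp_all add: tensor_alg_if_gen_alg)
  show ?case unfolding mult_entries[OF AB] gen_mult.IH by (simp add: algebra_simps)
qed

lemma off_diag_tensor_alg:
  assumes no_arc: "\<not> (\<exists>e\<in>arcs G. tail G e = x1 \<and> head G e = x2)"
    and bounded: "\<And>A. A \<in> tensor_alg G \<Longrightarrow> norm (\<tau> A) \<le> K * opnorm G A"
    and A: "A \<in> tensor_alg G"
  shows "\<tau> A $ 2 $ 1 = (\<tau> A $ 1 $ 1 - \<tau> A $ 2 $ 2) * \<tau> (Pop G x1) $ 2 $ 1"
proof -
  let ?p = "\<tau> (Pop G x1) $ 2 $ 1"
  define \<phi> where "\<phi> B = \<tau> B $ 2 $ 1 - (\<tau> B $ 1 $ 1 - \<tau> B $ 2 $ 2) * ?p" for B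
  have "\<phi> A = 0"
  proof (rule bounded_functional_vanishes[where \<phi> = \<phi> and A = A and C = "(1 + 2 * cmod ?p) * K"])
    show "\<phi> (op_add B C) = \<phi> B + \<phi> C" if "B \<in> tensor_alg G" "C \<in> tensor_alg G" for B C
      using matrix_hom_add[OF hom that] by (simp add: \<phi>_def algebra_simps)
    show "\<phi> (op_scale c B) = c * \<phi> B" if "B \<in> tensor_alg G" for B c
      using matrix_hom_scale[OF hom that] by (simp add: \<phi>_def algebra_simps)
    show "cmod (\<phi> B) \<le> (1 + 2 * cmod ?p) * K * opnorm G B" if B: "B \<in> tensor_alg G" for B
    proof -
      have "cmod (\<phi> B) \<le> cmod (\<tau> B $ 2 $ 1) + cmod (\<tau> B $ 1 $ 1 - \<tau> B $ 2 $ 2) * cmod ?p"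
        unfolding \<phi>_def norm_mult[symmetric] by (rule norm_triangle_ineq4)
      also have "\<dots> \<le> cmod (\<tau> B $ 2 $ 1) + (cmod (\<tau> B $ 1 $ 1) + cmod (\<tau> B $ 2 $ 2)) * cmod ?p"
        by (intro add_left_mono mult_right_mono norm_triangle_ineq4 norm_ge_zero)
      also have "\<dots> \<le> norm (\<tau> B) + (norm (\<tau> B) + norm (\<tau> B)) * cmod ?p"
        by (intro add_mono mult_right_mono norm_entry_le) auto
      also have "\<dots> = (1 + 2 * cmod ?p) * norm (\<tau> B)" by (simp add: algebra_simps)
      also have "\<dots> \<le> (1 + 2 * cmod ?p) * (K * opnorm G B)"
        by (intro mult_left_mono bounded[OF B]) auto
      finally show ?thesis by (simp add: mult.assoc)
    qed
    show "\<phi> B = 0" if "B \<in> gen_alg G" for B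
      using off_diag_gen_alg[OF no_arc that] by (simp add: \<phi>_def)
  qed (rule A)
  then show ?thesis by (simp add: \<phi>_def)
qed

lemma arc_if_lower_unit_in_image:
  assumes bounded: "\<And>A. A \<in> tensor_alg G \<Longrightarrow> norm (\<tau> A) \<le> K * opnorm G A"
    and unit: "lower_unit \<in> \<tau> ` tensor_alg G"
  shows "\<exists>e\<in>arcs G. tail G e = x1 \<and> head G e = x2"
proof (rule ccontr)
  assume no_arc: "\<not> (\<exists>e\<in>arcs G. tail G e = x1 \<and> head G e = x2)"
  obtain A where A: "lower_unit = \<tau> A" "A \<in> tensor_alg G" using unit by (rule imageE)
  have "\<tau> A $ 2 $ 1 = (\<tau> A $ 1 $ 1 - \<tau> A $ 2 $ 2) * \<tau> (Pop G x1) $ 2 $ 1"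
    by (rule off_diag_tensor_alg[OF no_arc bounded A(2)])
  then show False using A(1) by (simp add: lower_unit_def)
qed

end

lemma arc_if_nest_rep:
  assumes wf: "wf_digraph G" and "x1 \<in> verts G" "x2 \<in> verts G" "x1 \<noteq> x2"
    and \<pi>: "nest_rep G n0 \<pi>" and ab: "adapted_basis n0 h1 h2"
    and rho: "rho h1 \<pi> \<in> MGx G x1" "rho h2 \<pi> \<in> MGx G x2"
  shows "\<exists>e\<in>arcs G. tail G e = x1 \<and> head G e = x2"
proof -
  let ?\<tau> = "coeff_matrix (pair_basis h1 h2) \<circ> \<pi>"
  have in_nest: "\<pi> A \<in> nest_alg n0" if "A \<in> tensor_alg G" for A
    using \<pi> that unfolding nest_rep_iff by blast
  interpret lower_triangular_rep G ?\<tau> x1 x2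
  proof
    show "matrix_hom G ?\<tau>"
      using \<pi> adapted_basis_orthonormal[OF ab] by (simp add: nest_rep_iff matrix_hom_coeff_matrix)
    show "?\<tau> A $ 1 $ 2 = 0" if "A \<in> tensor_alg G" for A
      using coeff_matrix_nest_alg_upper[OF ab in_nest[OF that]] by simp
    show "?\<tau> (Pop G x1) $ 1 $ 1 = 1" "?\<tau> (Pop G x2) $ 2 $ 2 = 1"
      using rho by (simp_all add: MGx_def rho_def coeff_matrix_def pair_basis_def)
  qed (use assms in \<open>simp_all add: wf_digraph.tail_in_verts wf_digraph.head_in_verts\<close>)
  obtain K where K: "\<And>A. A \<in> tensor_alg G \<Longrightarrow> norm (\<pi> A) \<le> K * opnorm G A"
    using \<pi> unfolding nest_rep_iff by blast
  have b: "\<And>k. norm (pair_basis h1 h2 k) \<le> 1" by (rule adapted_basis_norm[OF ab])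
  have "norm (?\<tau> A) \<le> (16 * K) * opnorm G A" if "A \<in> tensor_alg G" for A
  proof -
    have "norm (?\<tau> A) \<le> 16 * norm (\<pi> A)" using norm_coeff_matrix_le[OF b] by simp
    also have "\<dots> \<le> 16 * (K * opnorm G A)" using K[OF that] by simp
    finally show ?thesis by simp
  qed
  moreover have "lower_unit \<in> ?\<tau> ` tensor_alg G"
  proof -
    obtain N where N: "N \<in> nest_alg n0" "coeff_matrix (pair_basis h1 h2) N = lower_unit"
      using lower_unit_in_coeff_matrix_image[OF ab] .
    then have "N \<in> \<pi> ` tensor_alg G" using \<pi> by (simp add: nest_rep_iff)
    then obtain A where "N = \<pi> A" "A \<in> tensor_alg G" by (rule imageE)
    then show ?thesis using N(2) by (intro image_eqI[of _ _ A]) simp_all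
  qed
  ultimately show ?thesis by (rule arc_if_lower_unit_in_image)
qed

section \<open>The compression to an edge\<close>

definition corner_path :: "('a,'b) pre_digraph \<Rightarrow> 'b \<Rightarrow> 2 \<Rightarrow> 'a + 'b list" where
  "corner_path G e j = (if j = 1 then Inl (tail G e) else Inr [e])"

definition delta_vec :: "'a + 'b list \<Rightarrow> complex \<Rightarrow> ('a,'b) fvec" where
  "delta_vec w c = (\<lambda>u. if u = w then c else 0)"

definition corner_entry :: "('a,'b) pre_digraph \<Rightarrow> 'b \<Rightarrow> ('a,'b) fop \<Rightarrow> 2 \<Rightarrow> 2 \<Rightarrow> complex" where
  "corner_entry G e T i j = T (delta_vec (corner_path G e j) 1) (corner_path G e i)"

definition corner_triangular ::
    "('a,'b) pre_digraph \<Rightarrow> 'b \<Rightarrow> ('a,'b) fvec set \<Rightarrow> ('a,'b) fop \<Rightarrow> bool" where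
  "corner_triangular G e S T \<longleftrightarrow>
     (\<forall>g\<in>S. \<forall>i. T g (corner_path G e i) =
        corner_entry G e T i 1 * g (corner_path G e 1) + corner_entry G e T i 2 * g (corner_path G e 2))
     \<and> corner_entry G e T 1 2 = 0"

definition unit_ball :: "('a,'b) pre_digraph \<Rightarrow> ('a,'b) fvec set" where
  "unit_ball G = {g \<in> ell2 G. l2norm g \<le> 1}"

lemma corner_path_eq_iff: "corner_path G e i = corner_path G e j \<longleftrightarrow> i = j"
  using exhaust_2[of i] exhaust_2[of j] by (auto simp: corner_path_def)

lemma delta_vec_corner_path:
  "delta_vec (corner_path G e j) c (corner_path G e k) = (if k = j then c else 0)"
  by (simp add: delta_vec_def corner_path_eq_iff)

lemma delta_vec_ell2:
  assumes "w \<in> fpaths G"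
  shows "delta_vec w c \<in> ell2 G" "l2norm (delta_vec w c) = cmod c"
proof -
  let ?f = "\<lambda>u. (cmod (delta_vec w c u))^2"
  have zero: "\<And>u. u \<in> UNIV - {w} \<Longrightarrow> ?f u = 0" by (simp add: delta_vec_def)
  have "?f summable_on UNIV"
    using summable_on_cong_neutral[of "{w}" UNIV ?f ?f] zero by auto
  then show "delta_vec w c \<in> ell2 G" using assms by (auto simp: ell2_def delta_vec_def)
  have "infsum ?f UNIV = infsum ?f {w}"
    using infsum_cong_neutral[of "{w}" UNIV ?f ?f] zero by auto
  then show "l2norm (delta_vec w c) = cmod c" by (simp add: l2norm_def delta_vec_def)
qed

lemma corner_path_in_fpaths:
  assumes "wf_digraph G" "e \<in> arcs G"
  shows "corner_path G e j \<in> fpaths G"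
  using assms fpaths_single[OF assms(2)]
  by (auto simp: corner_path_def fpaths_def wf_digraph.tail_in_verts)

lemma delta_vec_in_unit_ball:
  assumes "wf_digraph G" "e \<in> arcs G" "cmod c \<le> 1"
  shows "delta_vec (corner_path G e j) c \<in> unit_ball G"
  using delta_vec_ell2[OF corner_path_in_fpaths[OF assms(1,2)]] assms(3) by (simp add: unit_ball_def)

lemma corner_entry_Pop:
  "corner_entry G e (Pop G v) i j = (if i = j \<and> prange G (corner_path G e i) = v then 1 else 0)"
  by (auto simp: corner_entry_def Pop_def delta_vec_corner_path)

lemma Lop_corner_path:
  "Lop G e' f (corner_path G e 1) = 0"
  "Lop G e' f (corner_path G e 2) = (if e' = e then f (corner_path G e 1) else 0)"
  by (simp_all add: Lop_apply Lop_support_def strip_arc_def corner_path_def)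

lemma corner_entry_Lop: "corner_entry G e (Lop G e') i j = (if i = 2 \<and> j = 1 \<and> e' = e then 1 else 0)"
  using exhaust_2[of i] by (auto simp: corner_entry_def Lop_corner_path delta_vec_corner_path)

lemma corner_entry_add:
  "corner_entry G e (op_add A B) i j = corner_entry G e A i j + corner_entry G e B i j"
  by (simp add: corner_entry_def op_add_def)

lemma corner_entry_scale: "corner_entry G e (op_scale c A) i j = c * corner_entry G e A i j"
  by (simp add: corner_entry_def op_scale_def)

lemma corner_entry_comp:
  assumes "corner_triangular G e UNIV A"
  shows "corner_entry G e (A \<circ> B) i j =
    corner_entry G e A i 1 * corner_entry G e B 1 j + corner_entry G e A i 2 * corner_entry G e B 2 j"
proof -
  let ?g = "B (delta_vec (corner_path G e j) 1)"
  have "corner_entry G e (A \<circ> B) i j = A ?g (corner_path G e i)"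
    by (simp add: corner_entry_def)
  also have "\<dots> = corner_entry G e A i 1 * ?g (corner_path G e 1)
      + corner_entry G e A i 2 * ?g (corner_path G e 2)"
    using assms by (simp add: corner_triangular_def)
  finally show ?thesis by (simp add: corner_entry_def)
qed

text \<open>The orthogonal complement of the span of the two corner paths is invariant under
  the generators, so they act on the corner coordinates through their corner entries alone.\<close>

lemma corner_triangular_gen_alg:
  assumes "A \<in> gen_alg G"
  shows "corner_triangular G e UNIV A"
  using assms
proof (induction rule: gen_alg.induct)
  case (gen_L e')
  show ?case
    unfolding corner_triangular_def corner_entry_Lop by (simp add: forall_2 Lop_corner_path)
next
  case (gen_P v)
  show ?case
    unfolding corner_triangular_def corner_entry_Pop by (simp add: forall_2 Pop_def)
next
  case (gen_add A B)
  then show ?case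
    unfolding corner_triangular_def corner_entry_add by (simp add: op_add_def algebra_simps)
next
  case (gen_scale A c)
  then show ?case
    unfolding corner_triangular_def corner_entry_scale by (simp add: op_scale_def algebra_simps)
next
  case (gen_mult A B)
  have comp: "corner_entry G e (A \<circ> B) i j =
      corner_entry G e A i 1 * corner_entry G e B 1 j + corner_entry G e A i 2 * corner_entry G e B 2 j"
    for i j by (rule corner_entry_comp[OF gen_mult.IH(1)])
  from gen_mult.IH show ?case
    unfolding corner_triangular_def comp by (simp add: algebra_simps)
qed

lemma corner_row_defect_le:
  assumes B: "corner_triangular G e UNIV B" and g: "\<And>k. cmod (g (corner_path G e k)) \<le> 1"
  shows "cmod (T g (corner_path G e i) - (corner_entry G e T i 1 * g (corner_path G e 1)
      + corner_entry G e T i 2 * g (corner_path G e 2)))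
    \<le> cmod (T g (corner_path G e i) - B g (corner_path G e i))
      + cmod (corner_entry G e T i 1 - corner_entry G e B i 1)
      + cmod (corner_entry G e T i 2 - corner_entry G e B i 2)"
proof -
  let ?b = "corner_path G e"
  let ?d = "\<lambda>k. corner_entry G e T i k - corner_entry G e B i k"
  have "B g (?b i) = corner_entry G e B i 1 * g (?b 1) + corner_entry G e B i 2 * g (?b 2)"
    using B by (simp add: corner_triangular_def)
  then have eq: "T g (?b i) - (corner_entry G e T i 1 * g (?b 1) + corner_entry G e T i 2 * g (?b 2))
      = (T g (?b i) - B g (?b i)) - ?d 1 * g (?b 1) - ?d 2 * g (?b 2)"
    by (simp add: algebra_simps)
  have "cmod ((T g (?b i) - B g (?b i)) - ?d 1 * g (?b 1) - ?d 2 * g (?b 2))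
      \<le> cmod (T g (?b i) - B g (?b i)) + cmod (?d 1 * g (?b 1)) + cmod (?d 2 * g (?b 2))"
    by (rule order_trans[OF norm_triangle_ineq4 add_right_mono[OF norm_triangle_ineq4]])
  also have "\<dots> \<le> cmod (T g (?b i) - B g (?b i)) + cmod (?d 1) + cmod (?d 2)"
    using g by (intro add_mono order_refl) (simp_all add: norm_mult mult_left_le)
  finally show ?thesis unfolding eq .
qed

lemma corner_triangular_limit:
  assumes wf: "wf_digraph G" and e: "e \<in> arcs G"
    and approx: "\<And>\<epsilon>. \<epsilon> > 0 \<Longrightarrow>
      \<exists>B. corner_triangular G e UNIV B \<and> (\<forall>h\<in>unit_ball G. \<forall>u. cmod (T h u - B h u) < \<epsilon>)"
  shows "corner_triangular G e (unit_ball G) T"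
proof -
  let ?b = "corner_path G e"
  have \<delta>: "delta_vec (?b k) 1 \<in> unit_ball G" for k
    by (rule delta_vec_in_unit_ball[OF wf e]) simp
  have entry: "cmod (corner_entry G e T i k - corner_entry G e B i k) < \<epsilon>"
    if "\<forall>h\<in>unit_ball G. \<forall>u. cmod (T h u - B h u) < \<epsilon>" for B \<epsilon> i k
    using bspec[OF that \<delta>] unfolding corner_entry_def by simp
  have "T g (?b i) = corner_entry G e T i 1 * g (?b 1) + corner_entry G e T i 2 * g (?b 2)"
    if g: "g \<in> unit_ball G" for g i
  proof -
    have g_le: "\<And>k. cmod (g (?b k)) \<le> 1"
      using g norm_le_l2norm order_trans unfolding unit_ball_def by blast
    have "T g (?b i) - (corner_entry G e T i 1 * g (?b 1) + corner_entry G e T i 2 * g (?b 2)) = 0"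
    proof (rule zero_if_norm_le_eps[where C = 3])
      fix \<epsilon> :: real assume "\<epsilon> > 0"
      then obtain B where B: "corner_triangular G e UNIV B"
        and close: "\<forall>h\<in>unit_ball G. \<forall>u. cmod (T h u - B h u) < \<epsilon>"
        using approx by blast
      have "cmod (T g (?b i) - B g (?b i)) < \<epsilon>" using bspec[OF close g] by simp
      then show "norm (T g (?b i)
          - (corner_entry G e T i 1 * g (?b 1) + corner_entry G e T i 2 * g (?b 2))) \<le> 3 * \<epsilon>"
        using corner_row_defect_le[where g = g and T = T and i = i, OF B g_le]
          entry[OF close, of i 1] entry[OF close, of i 2]
        by simp
    qed
    then show ?thesis by simp
  qed
  moreover have "corner_entry G e T 1 2 = 0"
  proof (rule zero_if_norm_le_eps[where C = 1])
    fix \<epsilon> :: real assume "\<epsilon> > 0"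
    then obtain B where B: "corner_triangular G e UNIV B"
      and close: "\<forall>h\<in>unit_ball G. \<forall>u. cmod (T h u - B h u) < \<epsilon>"
      using approx by blast
    then show "norm (corner_entry G e T 1 2) \<le> 1 * \<epsilon>"
      using entry[OF close, of 1 2] by (simp add: corner_triangular_def)
  qed
  ultimately show ?thesis by (simp add: corner_triangular_def)
qed

lemma corner_triangular_tensor_alg:
  assumes wf: "wf_digraph G" and e: "e \<in> arcs G" and T: "T \<in> tensor_alg G"
  shows "corner_triangular G e (unit_ball G) T"
proof (rule corner_triangular_limit[OF wf e])
  fix \<epsilon> :: real assume "\<epsilon> > 0"
  then obtain B where B: "B \<in> gen_alg G"
    and close: "\<And>h u. h \<in> ell2 G \<Longrightarrow> l2norm h \<le> 1 \<Longrightarrow> cmod (T h u - B h u) < \<epsilon>"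
    using tensor_alg_approx_pointwise[OF T] by blast
  show "\<exists>B. corner_triangular G e UNIV B \<and> (\<forall>h\<in>unit_ball G. \<forall>u. cmod (T h u - B h u) < \<epsilon>)"
    using corner_triangular_gen_alg[OF B] close by (intro exI[of _ B]) (auto simp: unit_ball_def)
qed

text \<open>Members of \<open>tensor_alg G\<close> are only controlled on the unit ball, and a composite of two
  of them need not be a member again. Reading the entries off as derivatives at \<open>0\<close> along
  \<open>t \<xi>\<^sub>j\<close> makes the compression multiplicative all the same.\<close>

definition corner_rep :: "('a,'b) pre_digraph \<Rightarrow> 'b \<Rightarrow> ('a,'b) fop \<Rightarrow> complex^2^2" where
  "corner_rep G e T = (\<chi> i j. Lim (at_right (0::real))
     (\<lambda>t. T (delta_vec (corner_path G e j) (of_real t)) (corner_path G e i) / of_real t))"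

lemma Lim_at_right_eventually_eq:
  assumes "0 < \<delta>" "\<And>t. 0 < t \<Longrightarrow> t < \<delta> \<Longrightarrow> f t = c"
  shows "Lim (at_right (0::real)) f = c"
proof -
  have "eventually (\<lambda>t. f t = c) (at_right 0)"
    unfolding eventually_at_right_field using assms by (intro exI[of _ \<delta>]) auto
  from tendsto_Lim[OF trivial_limit_at_right_real tendsto_eventually[OF this]] show ?thesis by simp
qed

lemma corner_triangular_delta_vec:
  assumes wf: "wf_digraph G" and e: "e \<in> arcs G"
    and T: "corner_triangular G e (unit_ball G) T" and t: "0 < t" "t \<le> 1"
  shows "T (delta_vec (corner_path G e j) (of_real t)) (corner_path G e i)
    = of_real t * corner_entry G e T i j"
  using T delta_vec_in_unit_ball[OF wf e, of "of_real t" j] t exhaust_2[of j]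
  by (auto simp: corner_triangular_def delta_vec_corner_path)

lemma corner_rep_entry_eqI:
  assumes "0 < \<delta>" and "\<And>t. 0 < t \<Longrightarrow> t < \<delta> \<Longrightarrow>
      T (delta_vec (corner_path G e j) (of_real t)) (corner_path G e i) = of_real t * c"
  shows "corner_rep G e T $ i $ j = c"
proof -
  have "Lim (at_right 0)
      (\<lambda>t. T (delta_vec (corner_path G e j) (of_real t)) (corner_path G e i) / of_real t) = c"
    by (rule Lim_at_right_eventually_eq[OF assms(1)]) (simp add: assms(2))
  then show ?thesis by (simp add: corner_rep_def)
qed

lemma corner_rep_eq_entry:
  assumes wf: "wf_digraph G" and e: "e \<in> arcs G" and T: "T \<in> tensor_alg G"
  shows "corner_rep G e T $ i $ j = corner_entry G e T i j"
  by (rule corner_rep_entry_eqI[of 1])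
    (simp_all add: corner_triangular_delta_vec[OF wf e corner_triangular_tensor_alg[OF wf e T]])

lemma corner_rep_comp:
  assumes wf: "wf_digraph G" and e: "e \<in> arcs G" and A: "A \<in> tensor_alg G" and B: "B \<in> tensor_alg G"
  shows "corner_rep G e (A \<circ> B) = corner_rep G e A ** corner_rep G e B"
proof -
  let ?b = "corner_path G e"
  obtain KB where KB: "KB \<ge> 0" "\<And>f. f \<in> ell2 G \<Longrightarrow> B f \<in> ell2 G"
    "\<And>f. f \<in> ell2 G \<Longrightarrow> l2norm (B f) \<le> KB * l2norm f"
    using bounded_opE[OF bounded_op_tensor_alg[OF B]] by blast
  define \<delta> where "\<delta> = 1 / (KB + 1)"
  have \<delta>: "0 < \<delta>" "\<delta> \<le> 1" using KB(1) by (auto simp: \<delta>_def)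
  have "(A \<circ> B) (delta_vec (?b j) (of_real t)) (?b i) = of_real t *
      (corner_entry G e A i 1 * corner_entry G e B 1 j + corner_entry G e A i 2 * corner_entry G e B 2 j)"
    if t: "0 < t" "t < \<delta>" for t i j
  proof -
    let ?g = "delta_vec (?b j) (of_real t)"
    have g: "?g \<in> ell2 G" "l2norm ?g = t"
      using delta_vec_ell2[OF corner_path_in_fpaths[OF wf e], where c = "of_real t"] t by auto
    have "KB * t \<le> 1"
      using t KB(1) by (simp add: \<delta>_def field_simps)
    then have "B ?g \<in> unit_ball G"
      using KB(2,3)[OF g(1)] g(2) by (simp add: unit_ball_def)
    then have "A (B ?g) (?b i)
        = corner_entry G e A i 1 * B ?g (?b 1) + corner_entry G e A i 2 * B ?g (?b 2)"
      using corner_triangular_tensor_alg[OF wf e A] by (simp add: corner_triangular_def)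
    also have "\<dots> = of_real t * (corner_entry G e A i 1 * corner_entry G e B 1 j
        + corner_entry G e A i 2 * corner_entry G e B 2 j)"
      using corner_triangular_delta_vec[OF wf e corner_triangular_tensor_alg[OF wf e B]] t \<delta>
      by (simp add: algebra_simps)
    finally show ?thesis by simp
  qed
  then have "corner_rep G e (A \<circ> B) $ i $ j =
      corner_entry G e A i 1 * corner_entry G e B 1 j + corner_entry G e A i 2 * corner_entry G e B 2 j"
    for i j by (intro corner_rep_entry_eqI[OF \<delta>(1)])
  then show ?thesis
    by (simp add: vec_eq_iff matrix_matrix_mult_def sum_2 corner_rep_eq_entry[OF wf e A]
        corner_rep_eq_entry[OF wf e B])
qed

lemma matrix_hom_corner_rep:
  assumes wf: "wf_digraph G" and e: "e \<in> arcs G"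
  shows "matrix_hom G (corner_rep G e)"
  unfolding matrix_hom_def
proof (intro conjI ballI allI)
  fix A B assume A: "A \<in> tensor_alg G" and B: "B \<in> tensor_alg G"
  note A_tri = corner_triangular_delta_vec[OF wf e corner_triangular_tensor_alg[OF wf e A]]
  note B_tri = corner_triangular_delta_vec[OF wf e corner_triangular_tensor_alg[OF wf e B]]
  have "corner_rep G e (op_add A B) $ i $ j = corner_entry G e A i j + corner_entry G e B i j" for i j
    by (rule corner_rep_entry_eqI[of 1]) (simp_all add: op_add_def A_tri B_tri algebra_simps)
  then show "corner_rep G e (op_add A B) = corner_rep G e A + corner_rep G e B"
    by (simp add: vec_eq_iff corner_rep_eq_entry[OF wf e A] corner_rep_eq_entry[OF wf e B])
  show "corner_rep G e (A \<circ> B) = corner_rep G e A ** corner_rep G e B"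
    by (rule corner_rep_comp[OF wf e A B])
next
  fix A c assume A: "A \<in> tensor_alg G"
  note A_tri = corner_triangular_delta_vec[OF wf e corner_triangular_tensor_alg[OF wf e A]]
  have "corner_rep G e (op_scale c A) $ i $ j = c * corner_entry G e A i j" for i j
    by (rule corner_rep_entry_eqI[of 1]) (simp_all add: op_scale_def A_tri)
  then show "corner_rep G e (op_scale c A) = (\<chi> i j. c * corner_rep G e A $ i $ j)"
    by (simp add: vec_eq_iff corner_rep_eq_entry[OF wf e A])
qed

lemma norm_corner_rep_le:
  assumes wf: "wf_digraph G" and e: "e \<in> arcs G" and A: "A \<in> tensor_alg G"
  shows "norm (corner_rep G e A) \<le> 4 * opnorm G A"
proof -
  have entry: "cmod (corner_rep G e A $ i $ j) \<le> opnorm G A" for i j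
    using cmod_le_opnorm[OF bounded_op_tensor_alg[OF A]] delta_vec_in_unit_ball[OF wf e, of 1 j]
    by (simp add: corner_rep_eq_entry[OF wf e A] corner_entry_def unit_ball_def)
  then show ?thesis
    using norm_le_entries[of "corner_rep G e A"] entry[of 1 1] entry[of 1 2] entry[of 2 1] entry[of 2 2]
    by linarith
qed

lemma self_in_cline: "n0 \<in> cline n0"
  unfolding cline_def by (rule CollectI, rule exI[of _ 1]) simp

lemma nest_alg_axis_2: "nest_alg (axis 2 1) = {M :: complex^2^2. M $ 1 $ 2 = 0}"
proof (intro set_eqI iffI)
  fix M :: "complex^2^2"
  assume "M \<in> nest_alg (axis 2 1)"
  moreover have "axis 2 1 \<in> cline (axis 2 1)" by (rule self_in_cline)
  ultimately obtain c where "M *v axis 2 1 = c *s axis 2 1"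
    unfolding nest_alg_def cline_def by blast
  from arg_cong[OF this, of "\<lambda>v. v $ 1"] show "M \<in> {M. M $ 1 $ 2 = 0}"
    by (simp add: matrix_vector_mult_2 axis_def)
next
  fix M :: "complex^2^2"
  assume "M \<in> {M. M $ 1 $ 2 = 0}"
  then have "M *v (c *s axis 2 1) = (c * M $ 2 $ 2) *s axis 2 1" for c
    by (simp add: vec_eq_iff forall_2 matrix_vector_mult_2 axis_def)
  then show "M \<in> nest_alg (axis 2 1)"
    unfolding nest_alg_def cline_def by blast
qed

lemma corner_rep_image:
  assumes wf: "wf_digraph G" and e: "e \<in> arcs G" and loopfree: "tail G e \<noteq> head G e"
  shows "corner_rep G e ` tensor_alg G = {M. M $ 1 $ 2 = 0}"
proof
  show "corner_rep G e ` tensor_alg G \<subseteq> {M. M $ 1 $ 2 = 0}"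
    using corner_triangular_tensor_alg[OF wf e]
    by (auto simp: corner_rep_eq_entry[OF wf e] corner_triangular_def)
  show "{M. M $ 1 $ 2 = 0} \<subseteq> corner_rep G e ` tensor_alg G"
  proof
    fix M :: "complex^2^2" assume "M \<in> {M. M $ 1 $ 2 = 0}"
    then have M12: "M $ 1 $ 2 = 0" by simp
    define A where "A = op_add (op_scale (M$1$1) (Pop G (tail G e)))
      (op_add (op_scale (M$2$2) (Pop G (head G e))) (op_scale (M$2$1) (Lop G e)))"
    have "A \<in> gen_alg G"
      unfolding A_def using wf e
      by (intro gen_alg.intros) (simp_all add: wf_digraph.tail_in_verts wf_digraph.head_in_verts)
    then have A: "A \<in> tensor_alg G" by (rule tensor_alg_if_gen_alg)
    have "corner_entry G e A i j = M $ i $ j" for i j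
      using exhaust_2[of i] exhaust_2[of j] M12 loopfree
      by (auto simp: A_def corner_entry_add corner_entry_scale corner_entry_Pop corner_entry_Lop
          corner_path_def prange_def)
    then have "corner_rep G e A = M" by (simp add: vec_eq_iff corner_rep_eq_entry[OF wf e A])
    then show "M \<in> corner_rep G e ` tensor_alg G" using A by blast
  qed
qed

lemma rep2_if_arc:
  assumes wf: "wf_digraph G" and e: "e \<in> arcs G" and loopfree: "tail G e \<noteq> head G e"
  shows "corner_rep G e \<in> rep2 G (tail G e) (head G e)"
proof -
  let ?\<pi> = "corner_rep G e"
  have x1: "tail G e \<in> verts G" and x2: "head G e \<in> verts G"
    using wf e by (simp_all add: wf_digraph.tail_in_verts wf_digraph.head_in_verts)
  have hom: "matrix_hom G ?\<pi>" by (rule matrix_hom_corner_rep[OF wf e])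
  have image: "?\<pi> ` tensor_alg G = nest_alg (axis 2 1)"
    by (simp add: corner_rep_image[OF wf e loopfree] nest_alg_axis_2)
  have upper: "?\<pi> A $ 1 $ 2 = 0" if "A \<in> tensor_alg G" for A
    using that corner_rep_image[OF wf e loopfree] by blast
  have P: "?\<pi> (Pop G (tail G e)) $ 1 $ 1 = 1" "?\<pi> (Pop G (head G e)) $ 2 $ 2 = 1"
    by (simp_all add: corner_rep_eq_entry[OF wf e Pop_in_tensor_alg[OF x1]]
        corner_rep_eq_entry[OF wf e Pop_in_tensor_alg[OF x2]] corner_entry_Pop corner_path_def prange_def)
  have rho: "rho (axis 1 1) ?\<pi> = (\<lambda>A. ?\<pi> A $ 1 $ 1)" "rho (axis 2 1) ?\<pi> = (\<lambda>A. ?\<pi> A $ 2 $ 2)"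
    by (simp_all add: fun_eq_iff rho_def cinner_2 matrix_vector_mult_2 axis_def)
  have "nest_rep G (axis 2 1) ?\<pi>"
    using hom image norm_corner_rep_le[OF wf e] by (auto simp: nest_rep_iff axis_eq_0_iff)
  moreover have "adapted_basis (axis 2 1) (axis 1 1) (axis 2 1)"
    unfolding adapted_basis_def
  proof (intro conjI ballI self_in_cline)
    show "norm (axis 1 1 :: complex^2) = 1" "norm (axis 2 1 :: complex^2) = 1"
      by (simp_all add: norm_vec_def L2_set_def sum_2 axis_def)
    show "cinner (axis 1 1) y = 0" if "y \<in> cline (axis 2 1)" for y
      using that by (auto simp: cline_def cinner_2 axis_def)
  qed
  moreover have "rho (axis 1 1) ?\<pi> \<in> MGx G (tail G e)" "rho (axis 2 1) ?\<pi> \<in> MGx G (head G e)"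
    using character_diagonal_entry[OF hom upper Pop_in_tensor_alg[OF x1], where k = 1]
      character_diagonal_entry[OF hom upper Pop_in_tensor_alg[OF x2], where k = 2] P
    by (simp_all add: MGx_def rho)
  ultimately show ?thesis unfolding rep2_def by blast
qed

theorem theorem2p6:
  fixes G :: "('a,'b) pre_digraph" and x1 x2 :: 'a
  assumes "wf_digraph G" and "countable (verts G)" and "countable (arcs G)"
    and "x1 \<in> verts G" and "x2 \<in> verts G" and "x1 \<noteq> x2"
  shows "(\<forall>n0 \<pi> h1 h2. nest_rep G n0 \<pi> \<and> adapted_basis n0 h1 h2 \<and>
            rho h1 \<pi> \<in> MGx G x1 \<and> rho h2 \<pi> \<in> MGx G x2
          \<longrightarrow> (\<exists>e\<in>arcs G. tail G e = x1 \<and> head G e = x2))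
       \<and> (rep2 G x1 x2 \<noteq> {} \<longleftrightarrow> (\<exists>e\<in>arcs G. tail G e = x1 \<and> head G e = x2))"
proof -
  have "\<exists>e\<in>arcs G. tail G e = x1 \<and> head G e = x2"
    if "nest_rep G n0 \<pi>" "adapted_basis n0 h1 h2" "rho h1 \<pi> \<in> MGx G x1" "rho h2 \<pi> \<in> MGx G x2"
    for n0 \<pi> h1 h2
    using arc_if_nest_rep[OF assms(1,4,5,6) that] .
  moreover have "rep2 G x1 x2 \<noteq> {}" if "e \<in> arcs G" "tail G e = x1" "head G e = x2" for e
    using rep2_if_arc[OF assms(1) that(1)] that(2,3) assms(6) by blast
  ultimately show ?thesis unfolding rep2_def by blast
qed

end
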